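(* Let $A=\{x_1,\dots,x_\ell\}$ be a finite subset of $(\mathbb{R}\cup\{-\infty\})^d$ and let $\{\alpha_k\}_{k\in\mathbb N}$ be a sequence of positive real numbers with $\lim_{k\to\infty}\alpha_k=+\infty$. Then, in the Painlevé–Kuratowski sense, $$\lim_{k\to\infty} Co^{\sigma_{\alpha_k}}(A)=Co^{\sigma_{\infty}}(A).$$ Similarly, let $A=\{x_1,\dots,x_\ell\}$ be a finite subset of $(\mathbb{R}\cup\{+\infty\})^d$ and let $\{\alpha_k\}_{k\in\mathbb N}$ be a sequence of negative real numbers with $\lim_{k\to\infty}\alpha_k=-\infty$. Then $$\lim_{k\to\infty} Co^{\sigma_{\alpha_k}}(A)=Co^{\sigma_{-\infty}}(A).$$
   Context: Notation: $1\!\!1_d$ is the vector of ones in dimension $d$; $\mathbf{e}^z$ and $\mathbf{ln}(z)$ denote componentwise exponential and logarithm, with conventions $e^{-\infty}=0$, $\ln 0=-\infty$, and for $\alpha\neq 0$, $e^{\alpha t}=0$ when $\alpha t=-\infty$. For $\alpha\neq 0$ let $\mathbb M_\alpha=\mathbb{R}\cup\{-\infty\}$ if $\alpha>0$ and $\mathbb M_\alpha=\mathbb{R}\cup\{+\infty\}$ if $\alpha<0$. For a finite set $A=\{x_1,\dots,x_\ell\}\subset\mathbb M_\alpha^d$, the $\sigma_\alpha$-convex hull is $$Co^{\sigma_\alpha}(A)=\Big\{\tfrac1\alpha\mathbf{ln}\Big(\sum_{k=1}^\ell \mathbf e^{\alpha(t_k1\!\!1_d+x_k)}\Big):\ \tfrac1\alpha\ln\Big(\sum_{k=1}^\ell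 e^{\alpha t_k}\Big)=0,\ t\in\mathbb M_\alpha^\ell\Big\}.$$ The Max-Plus convex hull of $A\subset(\mathbb{R}\cup\{-\infty\})^d$ is $Co^{\sigma_\infty}(A)=\{\bigvee_{k}(t_k1\!\!1_d+x_k):\max_k t_k=0,\ t\in(\mathbb{R}\cup\{-\infty\})^\ell\}$, and the Min-Plus convex hull of $A\subset(\mathbb{R}\cup\{+\infty\})^d$ is $Co^{\sigma_{-\infty}}(A)=\{\bigwedge_{k}(t_k1\!\!1_d+x_k):\min_k t_k=0,\ t\in(\mathbb{R}\cup\{+\infty\})^\ell\}$, where $\vee,\wedge$ are componentwise max and min. For a sequence of sets $E_n$, the lower Painlevé–Kuratowski limit is the set of points $p$ such that there exist $p_n\in E_n$ with $p_n\to p$; the upper limit is the set of $p$ such that $p_{n_j}\to p$ for some subsequence with $p_{n_j}\in E_{n_j}$; the limit exists and equals $E$ when both coincide with $E$. (Points with infinite coordinates are handled with the usual order topology on $\mathbb{R}\cup\{\pm\infty\}$.) *)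

theory Defs
  imports "HOL-Analysis.Analysis"
begin

definition M_alpha :: "real \<Rightarrow> ereal set" where
  "M_alpha \<alpha> = (if \<alpha> > 0 then {z. z \<noteq> \<infinity>} else {z. z \<noteq> -\<infinity>})"

definition sexp :: "real \<Rightarrow> ereal \<Rightarrow> real" where
  "sexp \<alpha> z = (if ereal \<alpha> * z = -\<infinity> then 0 else exp (real_of_ereal (ereal \<alpha> * z)))"

definition slog :: "real \<Rightarrow> real \<Rightarrow> ereal" where
  "slog \<alpha> s = (if s = 0 then ereal (1 / \<alpha>) * (-\<infinity>) else ereal (ln s / \<alpha>))"

definition sigma_hull :: "real \<Rightarrow> (ereal ^ 'n) set \<Rightarrow> (ereal ^ 'n) set" where
  "sigma_hull \<alpha> A =
     {(\<chi> i. slog \<alpha> (\<Sum>x\<in>A. sexp \<alpha> (t x + x $ i))) | t.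
        (\<forall>x\<in>A. t x \<in> M_alpha \<alpha>) \<and> slog \<alpha> (\<Sum>x\<in>A. sexp \<alpha> (t x)) = 0}"

definition maxplus_hull :: "(ereal ^ 'n) set \<Rightarrow> (ereal ^ 'n) set" where
  "maxplus_hull A =
     {(\<chi> i. (SUP x\<in>A. t x + x $ i)) | t.
        (\<forall>x\<in>A. t x \<noteq> \<infinity>) \<and> (SUP x\<in>A. t x) = 0}"

definition minplus_hull :: "(ereal ^ 'n) set \<Rightarrow> (ereal ^ 'n) set" where
  "minplus_hull A =
     {(\<chi> i. (INF x\<in>A. t x + x $ i)) | t.
        (\<forall>x\<in>A. t x \<noteq> -\<infinity>) \<and> (INF x\<in>A. t x) = 0}"

definition PK_liminf :: "(nat \<Rightarrow> 'a::topological_space set) \<Rightarrow> 'a set" where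
  "PK_liminf E = {p. \<exists>q. (\<forall>n. q n \<in> E n) \<and> q \<longlonglongrightarrow> p}"

definition PK_limsup :: "(nat \<Rightarrow> 'a::topological_space set) \<Rightarrow> 'a set" where
  "PK_limsup E = {p. \<exists>r q. strict_mono r \<and> (\<forall>j. q j \<in> E (r j)) \<and> q \<longlonglongrightarrow> p}"

definition PK_limit :: "(nat \<Rightarrow> 'a::topological_space set) \<Rightarrow> 'a set \<Rightarrow> bool" where
  "PK_limit E S \<longleftrightarrow> PK_liminf E = S \<and> PK_limsup E = S"

end

theory Submission
  imports Defs
begin

text \<open>
  For \<open>\<alpha> > 0\<close> the log-sum-exp \<open>(1/\<alpha>) ln (\<Sum>x. exp (\<alpha> y x))\<close> lies between
  \<open>max y\<close> and \<open>max y + ln \<ell> / \<alpha>\<close>, hence tends to \<open>max y\<close> as \<open>\<alpha> \<rightarrow> \<infinity>\<close>, also when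
  the data \<open>y\<close> converge at the same time. A max-plus combination with weights \<open>t\<close> is
  therefore the limit of the \<open>\<sigma>_\<alpha>\<close>-combinations with the same weights, shifted by the
  vanishing constant that restores the normalisation. Conversely, the weights of a
  convergent sequence of \<open>\<sigma>_\<alpha>\<close>-combinations converge along a subsequence in the compact
  space of extended reals, and their limits are max-plus weights for the limit point.
  The min-plus case follows from the symmetry \<open>x \<mapsto> -x\<close>, \<open>\<alpha> \<mapsto> -\<alpha>\<close>, which exchanges
  \<open>\<sigma>_\<alpha>\<close>-hulls with \<open>\<sigma>_(-\<alpha>)\<close>-hulls and min-plus with max-plus hulls.
\<close>

lemma tendsto_SUP_finite:
  fixes f :: "'b \<Rightarrow> 'a \<Rightarrow> 'c::{complete_linorder, linorder_topology}"
  assumes "finite A" "\<And>x. x \<in> A \<Longrightarrow> ((\<lambda>k. f k x) \<longlongrightarrow> L x) F"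
  shows "((\<lambda>k. SUP x\<in>A. f k x) \<longlongrightarrow> (SUP x\<in>A. L x)) F"
  using assms by (induction A rule: finite_induct) (auto simp: sup_max intro: tendsto_max)

lemma convergent_subseq_finite_family:
  fixes f :: "nat \<Rightarrow> 'a \<Rightarrow> 'c::{complete_linorder, linorder_topology}"
  assumes "finite A"
  shows "\<exists>r L. strict_mono r \<and> (\<forall>x\<in>A. (\<lambda>j. f (r j) x) \<longlonglongrightarrow> L x)"
  using assms
proof (induction A rule: finite_induct)
  case empty
  show ?case using strict_mono_id by blast
next
  case (insert a A)
  then obtain r L where r: "strict_mono r" and L: "\<forall>x\<in>A. (\<lambda>j. f (r j) x) \<longlonglongrightarrow> L x"
    by blast
  obtain l r' where r': "strict_mono r'" and l: "((\<lambda>j. f (r j) a) \<circ> r') \<longlonglongrightarrow> l"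
    using compact_complete_linorder by blast
  have "\<forall>x\<in>insert a A. (\<lambda>j. f ((r \<circ> r') j) x) \<longlonglongrightarrow> (L(a := l)) x"
    using l LIMSEQ_subseq_LIMSEQ[OF _ r'] L insert.hyps(2) by (auto simp: o_def)
  moreover have "strict_mono (r \<circ> r')"
    using r r' by (rule strict_mono_o)
  ultimately show ?case by blast
qed

lemma sexp_nonneg: "sexp \<alpha> z \<ge> 0"
  by (simp add: sexp_def)

lemma sexp_ereal: "sexp \<alpha> (ereal r) = exp (\<alpha> * r)"
  by (simp add: sexp_def)

lemma sexp_MInfty: "\<alpha> > 0 \<Longrightarrow> sexp \<alpha> (-\<infinity>) = 0"
  by (simp add: sexp_def)

lemma sexp_le_exp:
  assumes "\<alpha> > 0" "z \<le> ereal m"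
  shows "sexp \<alpha> z \<le> exp (\<alpha> * m)"
  using assms by (cases z) (auto simp: sexp_def)

lemma sexp_diff_ereal:
  assumes "\<alpha> > 0" "z \<noteq> \<infinity>"
  shows "sexp \<alpha> (z - ereal c) = exp (- (\<alpha> * c)) * sexp \<alpha> z"
  using assms by (cases z) (auto simp: sexp_def algebra_simps simp flip: exp_add)

lemma sexp_uminus: "sexp \<alpha> z = sexp (-\<alpha>) (-z)"
  by (cases z) (auto simp: sexp_def)

lemma slog_zero: "\<alpha> > 0 \<Longrightarrow> slog \<alpha> 0 = -\<infinity>"
  by (simp add: slog_def)

lemma slog_nonzero: "s \<noteq> 0 \<Longrightarrow> slog \<alpha> s = ereal (ln s / \<alpha>)"
  by (simp add: slog_def)

lemma slog_exp_mult:
  assumes "\<alpha> > 0" "s \<ge> 0"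
  shows "slog \<alpha> (exp (- (\<alpha> * c)) * s) = slog \<alpha> s - ereal c"
  using assms by (cases "s = 0") (auto simp: slog_def ln_mult field_simps)

lemma slog_uminus: "slog \<alpha> s = - slog (-\<alpha>) s"
  by (cases "\<alpha> > 0"; cases "\<alpha> = 0") (auto simp: slog_def)

definition log_sum_exp :: "real \<Rightarrow> 'a set \<Rightarrow> ('a \<Rightarrow> ereal) \<Rightarrow> ereal" where
  "log_sum_exp \<alpha> A y = slog \<alpha> (\<Sum>x\<in>A. sexp \<alpha> (y x))"

lemma sigma_hull_eq_log_sum_exp:
  "sigma_hull \<alpha> A = {(\<chi> i. log_sum_exp \<alpha> A (\<lambda>x. t x + x $ i)) | t.
     (\<forall>x\<in>A. t x \<in> M_alpha \<alpha>) \<and> log_sum_exp \<alpha> A t = 0}"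
  by (simp add: sigma_hull_def log_sum_exp_def)

lemma log_sum_exp_bounds:
  fixes y :: "'a \<Rightarrow> ereal"
  assumes \<alpha>: "\<alpha> > 0" and A: "finite A" and y: "\<forall>x\<in>A. y x \<noteq> \<infinity>"
  shows "(SUP x\<in>A. y x) \<le> log_sum_exp \<alpha> A y"
    and "log_sum_exp \<alpha> A y \<le> (SUP x\<in>A. y x) + ereal (ln (card A) / \<alpha>)"
proof -
  have "(SUP x\<in>A. y x) \<le> log_sum_exp \<alpha> A y \<and>
        log_sum_exp \<alpha> A y \<le> (SUP x\<in>A. y x) + ereal (ln (card A) / \<alpha>)"
  proof (cases "(SUP x\<in>A. y x) = -\<infinity>")
    case True
    then have "\<forall>x\<in>A. y x = -\<infinity>"
      by (metis SUP_upper ereal_infty_less_eq(2))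
    then show ?thesis
      using True \<alpha> by (simp add: log_sum_exp_def sexp_MInfty slog_zero)
  next
    case False
    then have "A \<noteq> {}" by (auto simp: bot_ereal_def)
    then have "(SUP x\<in>A. y x) \<in> y ` A"
      using A by (simp add: cSup_eq_Max)
    then obtain x0 where x0: "x0 \<in> A" "y x0 = (SUP x\<in>A. y x)" by auto
    then obtain m where m: "(SUP x\<in>A. y x) = ereal m"
      using False y x0 by (metis ereal_cases)
    define S where "S = (\<Sum>x\<in>A. sexp \<alpha> (y x))"
    have "exp (\<alpha> * m) \<le> S"
      unfolding S_def using member_le_sum[of x0 A "\<lambda>x. sexp \<alpha> (y x)"] x0 m A
      by (simp add: sexp_ereal sexp_nonneg)
    have S_le: "S \<le> card A * exp (\<alpha> * m)"
      unfolding S_def using sum_bounded_above[of A "\<lambda>x. sexp \<alpha> (y x)"] sexp_le_exp[OF \<alpha>]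
      by (metis SUP_upper m)
    have "card A > 0"
      using A \<open>A \<noteq> {}\<close> by (simp add: card_gt_0_iff)
    have "S > 0"
      using \<open>exp (\<alpha> * m) \<le> S\<close> exp_gt_zero[of "\<alpha> * m"] by linarith
    have "\<alpha> * m \<le> ln S"
      using \<open>exp (\<alpha> * m) \<le> S\<close> \<open>S > 0\<close> by (simp add: ln_ge_iff)
    moreover have "ln S \<le> ln (card A) + \<alpha> * m"
      using ln_mono[OF S_le \<open>S > 0\<close>] \<open>card A > 0\<close> by (simp add: ln_mult)
    ultimately show ?thesis
      using \<alpha> m \<open>S > 0\<close>
      by (simp add: log_sum_exp_def S_def[symmetric] slog_nonzero field_simps)
  qed
  then show "(SUP x\<in>A. y x) \<le> log_sum_exp \<alpha> A y"
    and "log_sum_exp \<alpha> A y \<le> (SUP x\<in>A. y x) + ereal (ln (card A) / \<alpha>)"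
    by auto
qed

lemma log_sum_exp_diff_ereal:
  assumes "\<alpha> > 0" "\<forall>x\<in>A. y x \<noteq> \<infinity>"
  shows "log_sum_exp \<alpha> A (\<lambda>x. y x - ereal c) = log_sum_exp \<alpha> A y - ereal c"
  using assms slog_exp_mult[OF assms(1) sum_nonneg[OF sexp_nonneg]]
  by (simp add: log_sum_exp_def sexp_diff_ereal flip: sum_distrib_left)

lemma log_sum_exp_uminus: "log_sum_exp \<alpha> A y = - log_sum_exp (-\<alpha>) A (\<lambda>x. - y x)"
  by (simp add: log_sum_exp_def slog_uminus[of \<alpha>] sexp_uminus[of \<alpha>])

lemma log_sum_exp_cong:
  "(\<And>x. x \<in> A \<Longrightarrow> y x = z x) \<Longrightarrow> log_sum_exp \<alpha> A y = log_sum_exp \<alpha> A z"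
  unfolding log_sum_exp_def by (metis sum.cong)

lemma log_sum_exp_image:
  "inj_on f A \<Longrightarrow> log_sum_exp \<alpha> (f ` A) y = log_sum_exp \<alpha> A (\<lambda>x. y (f x))"
  by (simp add: log_sum_exp_def sum.reindex)

lemma tendsto_log_sum_exp_SUP:
  fixes y :: "'b \<Rightarrow> 'a \<Rightarrow> ereal"
  assumes \<alpha>: "\<And>k. \<alpha> k > 0" "filterlim \<alpha> at_top F" and A: "finite A"
    and y: "\<And>k. \<forall>x\<in>A. y k x \<noteq> \<infinity>" and lim: "\<And>x. x \<in> A \<Longrightarrow> ((\<lambda>k. y k x) \<longlongrightarrow> L x) F"
  shows "((\<lambda>k. log_sum_exp (\<alpha> k) A (y k)) \<longlongrightarrow> (SUP x\<in>A. L x)) F"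
proof (rule tendsto_sandwich)
  have SUP_lim: "((\<lambda>k. SUP x\<in>A. y k x) \<longlongrightarrow> (SUP x\<in>A. L x)) F"
    using A lim by (rule tendsto_SUP_finite)
  then show "((\<lambda>k. SUP x\<in>A. y k x) \<longlongrightarrow> (SUP x\<in>A. L x)) F" .
  have "((\<lambda>k. ln (card A) * inverse (\<alpha> k)) \<longlongrightarrow> ln (card A) * 0) F"
    by (intro tendsto_intros tendsto_inverse_0_at_top \<alpha>)
  then have "((\<lambda>k. ereal (ln (card A) / \<alpha> k)) \<longlongrightarrow> ereal 0) F"
    by (simp add: divide_inverse)
  from tendsto_add_ereal_general[OF _ SUP_lim this]
  show "((\<lambda>k. (SUP x\<in>A. y k x) + ereal (ln (card A) / \<alpha> k)) \<longlongrightarrow> (SUP x\<in>A. L x)) F"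
    by simp
  show "\<forall>\<^sub>F k in F. (SUP x\<in>A. y k x) \<le> log_sum_exp (\<alpha> k) A (y k)"
    and "\<forall>\<^sub>F k in F. log_sum_exp (\<alpha> k) A (y k) \<le> (SUP x\<in>A. y k x) + ereal (ln (card A) / \<alpha> k)"
    using log_sum_exp_bounds[OF \<alpha>(1) A y] by auto
qed

lemma maxplus_hull_subset_PK_liminf:
  fixes A :: "(ereal ^ 'n) set"
  assumes A: "finite A" "\<forall>x\<in>A. \<forall>i. x $ i \<noteq> \<infinity>"
    and \<alpha>: "\<And>k. \<alpha> k > 0" "filterlim \<alpha> at_top sequentially"
  shows "maxplus_hull A \<subseteq> PK_liminf (\<lambda>k. sigma_hull (\<alpha> k) A)"
proof
  fix p assume "p \<in> maxplus_hull A"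
  then obtain t where p: "p = (\<chi> i. SUP x\<in>A. t x + x $ i)"
    and t: "\<forall>x\<in>A. t x \<noteq> \<infinity>" and t0: "(SUP x\<in>A. t x) = 0"
    unfolding maxplus_hull_def by blast
  have ti: "\<forall>x\<in>A. t x + x $ i \<noteq> \<infinity>" for i
    using t A(2) by auto
  define c where "c k = real_of_ereal (log_sum_exp (\<alpha> k) A t)" for k
  have c: "log_sum_exp (\<alpha> k) A t = ereal (c k)" for k
    using log_sum_exp_bounds[OF \<alpha>(1) A(1) t, of k] t0 unfolding c_def
    by (cases "log_sum_exp (\<alpha> k) A t") auto
  define q where "q k = (\<chi> i. log_sum_exp (\<alpha> k) A (\<lambda>x. t x + x $ i) - ereal (c k))" for k
  have "q k \<in> sigma_hull (\<alpha> k) A" for k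
  proof -
    have "\<forall>x\<in>A. t x - ereal (c k) \<in> M_alpha (\<alpha> k)"
      using t \<alpha>(1) by (auto simp: M_alpha_def ereal_minus_eq_PInfty_iff)
    moreover have "log_sum_exp (\<alpha> k) A (\<lambda>x. t x - ereal (c k)) = 0"
      using log_sum_exp_diff_ereal[OF \<alpha>(1) t] c by simp
    moreover have "q k = (\<chi> i. log_sum_exp (\<alpha> k) A (\<lambda>x. (t x - ereal (c k)) + x $ i))"
      using log_sum_exp_diff_ereal[OF \<alpha>(1) ti, symmetric]
      by (simp add: q_def add_diff_eq_ereal add.commute)
    ultimately show ?thesis
      unfolding sigma_hull_eq_log_sum_exp by (intro CollectI exI[of _ "\<lambda>x. t x - ereal (c k)"]) simp
  qed
  moreover have "q \<longlonglongrightarrow> p"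
  proof (rule vec_tendstoI)
    fix i
    have "(\<lambda>k. log_sum_exp (\<alpha> k) A (\<lambda>x. t x + x $ i)) \<longlonglongrightarrow> p $ i"
      unfolding p using tendsto_log_sum_exp_SUP[OF \<alpha> A(1) ti] by simp
    moreover have "(\<lambda>k. ereal (c k)) \<longlonglongrightarrow> 0"
      using tendsto_log_sum_exp_SUP[OF \<alpha> A(1) t, of "\<lambda>x. t x"] t0 c by simp
    ultimately show "(\<lambda>k. q k $ i) \<longlonglongrightarrow> p $ i"
      unfolding q_def using tendsto_diff_ereal_general[of _ "p $ i" _ _ 0] by simp
  qed
  ultimately show "p \<in> PK_liminf (\<lambda>k. sigma_hull (\<alpha> k) A)"
    unfolding PK_liminf_def by blast
qed

lemma PK_limsup_subset_maxplus_hull: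
  fixes A :: "(ereal ^ 'n) set"
  assumes A: "finite A" "\<forall>x\<in>A. \<forall>i. x $ i \<noteq> \<infinity>"
    and \<alpha>: "\<And>k. \<alpha> k > 0" "filterlim \<alpha> at_top sequentially"
  shows "PK_limsup (\<lambda>k. sigma_hull (\<alpha> k) A) \<subseteq> maxplus_hull A"
proof
  fix p assume "p \<in> PK_limsup (\<lambda>k. sigma_hull (\<alpha> k) A)"
  then obtain r q where r: "strict_mono r" and q: "\<forall>j. q j \<in> sigma_hull (\<alpha> (r j)) A"
    and "q \<longlonglongrightarrow> p"
    unfolding PK_limsup_def by blast
  have "\<forall>j. \<exists>t. q j = (\<chi> i. log_sum_exp (\<alpha> (r j)) A (\<lambda>x. t x + x $ i)) \<and>
      (\<forall>x\<in>A. t x \<in> M_alpha (\<alpha> (r j))) \<and> log_sum_exp (\<alpha> (r j)) A t = 0"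
    using q unfolding sigma_hull_eq_log_sum_exp by blast
  then obtain t where q_eq: "\<And>j. q j = (\<chi> i. log_sum_exp (\<alpha> (r j)) A (\<lambda>x. t j x + x $ i))"
    and tM: "\<And>j. \<forall>x\<in>A. t j x \<in> M_alpha (\<alpha> (r j))"
    and t0: "\<And>j. log_sum_exp (\<alpha> (r j)) A (t j) = 0"
    by metis
  have t_fin: "\<forall>x\<in>A. t j x \<noteq> \<infinity>" for j
    using tM \<alpha>(1) by (auto simp: M_alpha_def)
  have t_le: "t j x \<le> 0" if "x \<in> A" for j x
    using log_sum_exp_bounds(1)[OF \<alpha>(1)[of "r j"] A(1) t_fin[of j]] t0 SUP_upper[OF that, of "t j"]
    by simp
  obtain r' T where r': "strict_mono r'" and T: "\<forall>x\<in>A. (\<lambda>j. t (r' j) x) \<longlonglongrightarrow> T x"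
    using convergent_subseq_finite_family[OF A(1), of t] by blast
  have T_le: "T x \<le> 0" if "x \<in> A" for x
    by (rule LIMSEQ_le_const2[OF T[rule_format, OF that]]) (use t_le that in auto)
  define \<beta> where "\<beta> = (\<lambda>j. \<alpha> (r (r' j)))"
  have \<beta>: "\<And>j. \<beta> j > 0" "filterlim \<beta> at_top sequentially"
    using \<alpha> filterlim_compose[OF \<alpha>(2) filterlim_subseq[OF strict_mono_o[OF r r']]]
    unfolding \<beta>_def by (auto simp: o_def)
  have "(\<lambda>j. log_sum_exp (\<beta> j) A (t (r' j))) \<longlonglongrightarrow> (SUP x\<in>A. T x)"
    using T by (intro tendsto_log_sum_exp_SUP[OF \<beta> A(1) t_fin]) auto
  then have T0: "(SUP x\<in>A. T x) = 0"
    using t0 by (simp add: \<beta>_def LIMSEQ_const_iff)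
  have "p $ i = (SUP x\<in>A. T x + x $ i)" for i
  proof (rule LIMSEQ_unique)
    show "(\<lambda>j. q (r' j) $ i) \<longlonglongrightarrow> p $ i"
      using tendsto_vec_nth[OF LIMSEQ_subseq_LIMSEQ[OF \<open>q \<longlonglongrightarrow> p\<close> r']] by (simp add: o_def)
    have "\<forall>x\<in>A. (\<lambda>j. t (r' j) x + x $ i) \<longlonglongrightarrow> T x + x $ i"
      using T T_le A(2) by (force intro!: tendsto_add_ereal_general)
    then have "(\<lambda>j. log_sum_exp (\<beta> j) A (\<lambda>x. t (r' j) x + x $ i))
        \<longlonglongrightarrow> (SUP x\<in>A. T x + x $ i)"
      using t_fin A(2) by (intro tendsto_log_sum_exp_SUP[OF \<beta> A(1)]) auto
    then show "(\<lambda>j. q (r' j) $ i) \<longlonglongrightarrow> (SUP x\<in>A. T x + x $ i)"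
      by (simp add: q_eq \<beta>_def)
  qed
  then have "p = (\<chi> i. SUP x\<in>A. T x + x $ i)"
    by (simp add: vec_eq_iff)
  then show "p \<in> maxplus_hull A"
    unfolding maxplus_hull_def using T0 T_le by (intro CollectI exI[of _ T]) force
qed

lemma PK_liminf_subset_PK_limsup: "PK_liminf E \<subseteq> PK_limsup E"
  unfolding PK_liminf_def PK_limsup_def using strict_mono_id by fastforce

lemma PK_limit_sigma_hull_maxplus_hull:
  fixes A :: "(ereal ^ 'n) set"
  assumes "finite A" "\<forall>x\<in>A. \<forall>i. x $ i \<noteq> \<infinity>" "\<And>k. \<alpha> k > 0" "filterlim \<alpha> at_top sequentially"
  shows "PK_limit (\<lambda>k. sigma_hull (\<alpha> k) A) (maxplus_hull A)"
  using maxplus_hull_subset_PK_liminf[OF assms] PK_limsup_subset_maxplus_hull[OF assms]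
    PK_liminf_subset_PK_limsup[of "\<lambda>k. sigma_hull (\<alpha> k) A"]
  unfolding PK_limit_def by blast

lemma PK_liminf_image_involution:
  assumes "\<And>q p. q \<longlonglongrightarrow> p \<Longrightarrow> (\<lambda>n. f (q n)) \<longlonglongrightarrow> f p" "\<And>x. f (f x) = x"
  shows "PK_liminf (\<lambda>k. f ` E k) = f ` PK_liminf E"
proof -
  have sub: "PK_liminf (\<lambda>k. f ` E k) \<subseteq> f ` PK_liminf E" for E
  proof
    fix p assume "p \<in> PK_liminf (\<lambda>k. f ` E k)"
    then obtain q where "\<forall>n. q n \<in> f ` E n" "q \<longlonglongrightarrow> p"
      unfolding PK_liminf_def by blast
    then have "\<forall>n. f (q n) \<in> E n" "(\<lambda>n. f (q n)) \<longlonglongrightarrow> f p"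
      using assms by (metis imageE)+
    then have "f p \<in> PK_liminf E"
      unfolding PK_liminf_def by (intro CollectI exI[of _ "\<lambda>n. f (q n)"]) simp
    then show "p \<in> f ` PK_liminf E"
      using assms(2) by (metis image_eqI)
  qed
  have "PK_liminf E \<subseteq> f ` PK_liminf (\<lambda>k. f ` E k)"
    using sub[of "\<lambda>k. f ` E k"] assms(2) by (simp add: image_image)
  then have "f ` PK_liminf E \<subseteq> PK_liminf (\<lambda>k. f ` E k)"
    using assms(2) by (auto simp: image_image)
  with sub show ?thesis by blast
qed

lemma PK_limsup_image_involution:
  assumes "\<And>q p. q \<longlonglongrightarrow> p \<Longrightarrow> (\<lambda>n. f (q n)) \<longlonglongrightarrow> f p" "\<And>x. f (f x) = x"
  shows "PK_limsup (\<lambda>k. f ` E k) = f ` PK_limsup E"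
proof -
  have sub: "PK_limsup (\<lambda>k. f ` E k) \<subseteq> f ` PK_limsup E" for E
  proof
    fix p assume "p \<in> PK_limsup (\<lambda>k. f ` E k)"
    then obtain r q where "strict_mono r" "\<forall>n. q n \<in> f ` E (r n)" "q \<longlonglongrightarrow> p"
      unfolding PK_limsup_def by blast
    then have "strict_mono r" "\<forall>n. f (q n) \<in> E (r n)" "(\<lambda>n. f (q n)) \<longlonglongrightarrow> f p"
      using assms by (metis imageE)+
    then have "f p \<in> PK_limsup E"
      unfolding PK_limsup_def by (intro CollectI exI[of _ r] exI[of _ "\<lambda>n. f (q n)"]) simp
    then show "p \<in> f ` PK_limsup E"
      using assms(2) by (metis image_eqI)
  qed
  have "PK_limsup E \<subseteq> f ` PK_limsup (\<lambda>k. f ` E k)"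
    using sub[of "\<lambda>k. f ` E k"] assms(2) by (simp add: image_image)
  then have "f ` PK_limsup E \<subseteq> PK_limsup (\<lambda>k. f ` E k)"
    using assms(2) by (auto simp: image_image)
  with sub show ?thesis by blast
qed

lemma uminus_uminus_vec_ereal [simp]: "- (- x) = (x :: ereal ^ 'n)"
  by (simp add: vec_eq_iff)

lemma tendsto_uminus_vec_ereal:
  fixes q :: "_ \<Rightarrow> ereal ^ 'n"
  shows "(q \<longlongrightarrow> p) F \<Longrightarrow> ((\<lambda>n. - q n) \<longlongrightarrow> - p) F"
  by (intro vec_tendstoI) (auto intro: tendsto_uminus_ereal tendsto_vec_nth)

lemma uminus_in_M_alpha: "\<alpha> \<noteq> 0 \<Longrightarrow> a \<in> M_alpha \<alpha> \<Longrightarrow> - a \<in> M_alpha (- \<alpha>)"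
  by (cases a) (auto simp: M_alpha_def split: if_splits)

lemma uminus_add_M_alpha: "a \<in> M_alpha \<alpha> \<Longrightarrow> b \<in> M_alpha \<alpha> \<Longrightarrow> - (a + b) = - a + - b"
  by (cases a; cases b) (auto simp: M_alpha_def split: if_splits)

lemma inj_uminus_vec_ereal: "inj_on (uminus :: ereal ^ 'n \<Rightarrow> _) A"
  by (metis inj_onI uminus_uminus_vec_ereal)

lemma sigma_hull_subset_uminus:
  fixes A :: "(ereal ^ 'n) set"
  assumes \<alpha>: "\<alpha> \<noteq> 0" and A: "\<forall>x\<in>A. \<forall>i. x $ i \<in> M_alpha \<alpha>"
  shows "sigma_hull \<alpha> A \<subseteq> uminus ` sigma_hull (- \<alpha>) (uminus ` A)"
proof
  fix p assume "p \<in> sigma_hull \<alpha> A"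
  then obtain t where p: "p = (\<chi> i. log_sum_exp \<alpha> A (\<lambda>x. t x + x $ i))"
    and tM: "\<forall>x\<in>A. t x \<in> M_alpha \<alpha>" and t0: "log_sum_exp \<alpha> A t = 0"
    unfolding sigma_hull_eq_log_sum_exp by blast
  define s where "s y = - t (- y)" for y
  have "log_sum_exp (- \<alpha>) (uminus ` A) (\<lambda>y. s y + y $ i) = - log_sum_exp \<alpha> A (\<lambda>x. t x + x $ i)" for i
  proof -
    have neg_add: "\<forall>x\<in>A. - t x + - (x $ i) = - (t x + x $ i)"
      using tM A by (metis uminus_add_M_alpha)
    have "log_sum_exp (- \<alpha>) (uminus ` A) (\<lambda>y. s y + y $ i)
        = log_sum_exp (- \<alpha>) A (\<lambda>x. s (- x) + (- x) $ i)"
      by (rule log_sum_exp_image[OF inj_uminus_vec_ereal])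
    also have "\<dots> = log_sum_exp (- \<alpha>) A (\<lambda>x. - (t x + x $ i))"
      using neg_add by (intro log_sum_exp_cong) (simp add: s_def)
    also have "\<dots> = - log_sum_exp \<alpha> A (\<lambda>x. t x + x $ i)"
      using log_sum_exp_uminus[of \<alpha> A "\<lambda>x. t x + x $ i"] by simp
    finally show ?thesis .
  qed
  then have "p = - (\<chi> i. log_sum_exp (- \<alpha>) (uminus ` A) (\<lambda>y. s y + y $ i))"
    by (simp add: p vec_eq_iff)
  moreover have "log_sum_exp (- \<alpha>) (uminus ` A) s = 0"
    using log_sum_exp_uminus[of \<alpha> A t] t0
    by (simp add: log_sum_exp_image[OF inj_uminus_vec_ereal] s_def)
  moreover have "\<forall>y\<in>uminus ` A. s y \<in> M_alpha (- \<alpha>)"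
    using tM \<alpha> by (auto simp: s_def uminus_in_M_alpha)
  ultimately show "p \<in> uminus ` sigma_hull (- \<alpha>) (uminus ` A)"
    unfolding sigma_hull_eq_log_sum_exp by blast
qed

lemma sigma_hull_eq_uminus:
  fixes A :: "(ereal ^ 'n) set"
  assumes \<alpha>: "\<alpha> \<noteq> 0" and A: "\<forall>x\<in>A. \<forall>i. x $ i \<in> M_alpha \<alpha>"
  shows "sigma_hull \<alpha> A = uminus ` sigma_hull (- \<alpha>) (uminus ` A)"
proof
  show "sigma_hull \<alpha> A \<subseteq> uminus ` sigma_hull (- \<alpha>) (uminus ` A)"
    using assms by (rule sigma_hull_subset_uminus)
  have "\<forall>y\<in>uminus ` A. \<forall>i. y $ i \<in> M_alpha (- \<alpha>)"
    using A \<alpha> by (auto simp: uminus_in_M_alpha)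
  then have "sigma_hull (- \<alpha>) (uminus ` A) \<subseteq> uminus ` sigma_hull \<alpha> A"
    using sigma_hull_subset_uminus[of "- \<alpha>" "uminus ` A"] \<alpha> by (simp add: image_image)
  then show "uminus ` sigma_hull (- \<alpha>) (uminus ` A) \<subseteq> sigma_hull \<alpha> A"
    by (auto simp: image_image)
qed

lemma ereal_INF_add_eq_uminus_SUP:
  fixes t u :: "'a \<Rightarrow> ereal"
  assumes "\<forall>x\<in>A. t x \<noteq> -\<infinity> \<and> u x \<noteq> -\<infinity>"
  shows "(INF x\<in>A. t x + u x) = - (SUP x\<in>A. - t x + - u x)"
proof -
  have "\<forall>x\<in>A. t x + u x = - (- t x + - u x)"
  proof
    fix x assume "x \<in> A"
    then show "t x + u x = - (- t x + - u x)"
      using assms by (cases "t x"; cases "u x") auto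
  qed
  then show ?thesis
    by (simp add: ereal_INF_uminus_eq[symmetric] cong: INF_cong)
qed

lemma minplus_hull_eq_uminus_maxplus_hull:
  fixes A :: "(ereal ^ 'n) set"
  assumes A: "\<forall>x\<in>A. \<forall>i. x $ i \<noteq> -\<infinity>"
  shows "minplus_hull A = uminus ` maxplus_hull (uminus ` A)"
proof -
  have dual: "(\<chi> i. INF x\<in>A. t x + x $ i) = - (\<chi> i. SUP y\<in>uminus ` A. s y + y $ i)
      \<and> (INF x\<in>A. t x) = - (SUP y\<in>uminus ` A. s y)"
    if ts: "\<forall>x\<in>A. s (- x) = - t x" and t: "\<forall>x\<in>A. t x \<noteq> -\<infinity>" for t s
  proof -
    have "(SUP y\<in>uminus ` A. s y + y $ i) = (SUP x\<in>A. - t x + - (x $ i))" for i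
      unfolding image_image using ts by (intro SUP_cong) auto
    then have "(INF x\<in>A. t x + x $ i) = - (SUP y\<in>uminus ` A. s y + y $ i)" for i
      using ereal_INF_add_eq_uminus_SUP[of A t "\<lambda>x. x $ i"] t A by simp
    moreover have "(SUP y\<in>uminus ` A. s y) = (SUP x\<in>A. - t x)"
      unfolding image_image using ts by (intro SUP_cong) auto
    then have "(INF x\<in>A. t x) = - (SUP y\<in>uminus ` A. s y)"
      by (simp add: ereal_SUP_uminus_eq)
    ultimately show ?thesis
      by (simp add: vec_eq_iff)
  qed
  show ?thesis
  proof (intro equalityI subsetI)
    fix p assume "p \<in> minplus_hull A"
    then obtain t where p: "p = (\<chi> i. INF x\<in>A. t x + x $ i)"
      and t: "\<forall>x\<in>A. t x \<noteq> -\<infinity>" and t0: "(INF x\<in>A. t x) = 0"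
      unfolding minplus_hull_def by blast
    define s where "s y = - t (- y)" for y
    have ts: "\<forall>x\<in>A. s (- x) = - t x"
      by (simp add: s_def)
    have "\<forall>y\<in>uminus ` A. s y \<noteq> \<infinity>"
      using t by (auto simp: s_def ereal_uminus_eq_reorder)
    moreover have "p = - (\<chi> i. SUP y\<in>uminus ` A. s y + y $ i)" "(SUP y\<in>uminus ` A. s y) = 0"
      using dual[OF ts t] t0 unfolding p by auto
    ultimately show "p \<in> uminus ` maxplus_hull (uminus ` A)"
      unfolding maxplus_hull_def by blast
  next
    fix p assume "p \<in> uminus ` maxplus_hull (uminus ` A)"
    then obtain s where p: "p = - (\<chi> i. SUP y\<in>uminus ` A. s y + y $ i)"
      and s: "\<forall>y\<in>uminus ` A. s y \<noteq> \<infinity>" and s0: "(SUP y\<in>uminus ` A. s y) = 0"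
      unfolding maxplus_hull_def by blast
    define t where "t x = - s (- x)" for x
    have ts: "\<forall>x\<in>A. s (- x) = - t x"
      by (simp add: t_def)
    have t: "\<forall>x\<in>A. t x \<noteq> -\<infinity>"
      using s by (auto simp: t_def ereal_uminus_eq_reorder)
    moreover have "p = (\<chi> i. INF x\<in>A. t x + x $ i)" "(INF x\<in>A. t x) = 0"
      using dual[OF ts t] s0 unfolding p by auto
    ultimately show "p \<in> minplus_hull A"
      unfolding minplus_hull_def by blast
  qed
qed

lemma PK_limit_sigma_hull_minplus_hull:
  fixes A :: "(ereal ^ 'n) set"
  assumes A: "finite A" "\<forall>x\<in>A. \<forall>i. x $ i \<noteq> -\<infinity>"
    and \<alpha>: "\<And>k. \<alpha> k < 0" "filterlim \<alpha> at_bot sequentially"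
  shows "PK_limit (\<lambda>k. sigma_hull (\<alpha> k) A) (minplus_hull A)"
proof -
  have "sigma_hull (\<alpha> k) A = uminus ` sigma_hull (- \<alpha> k) (uminus ` A)" for k
    using A(2) \<alpha>(1)[of k] by (intro sigma_hull_eq_uminus) (auto simp: M_alpha_def)
  moreover have "PK_limit (\<lambda>k. sigma_hull (- \<alpha> k) (uminus ` A)) (maxplus_hull (uminus ` A))"
    using A \<alpha> by (intro PK_limit_sigma_hull_maxplus_hull)
      (auto simp: filterlim_uminus_at_top ereal_uminus_eq_reorder)
  moreover have "PK_liminf (\<lambda>k. uminus ` E k) = uminus ` PK_liminf E"
    and "PK_limsup (\<lambda>k. uminus ` E k) = uminus ` PK_limsup E" for E :: "nat \<Rightarrow> (ereal ^ 'n) set"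
    by (auto intro!: PK_liminf_image_involution PK_limsup_image_involution tendsto_uminus_vec_ereal)
  ultimately show ?thesis
    unfolding PK_limit_def minplus_hull_eq_uminus_maxplus_hull[OF A(2)] by simp
qed

theorem mainTheorem1:
  shows "(\<forall>(A :: (ereal ^ 'n) set) (\<alpha> :: nat \<Rightarrow> real).
            finite A \<and> (\<forall>x\<in>A. \<forall>i. x $ i \<noteq> \<infinity>) \<and> (\<forall>k. \<alpha> k > 0)
            \<and> filterlim \<alpha> at_top sequentially
          \<longrightarrow> PK_limit (\<lambda>k. sigma_hull (\<alpha> k) A) (maxplus_hull A))
       \<and> (\<forall>(A :: (ereal ^ 'n) set) (\<alpha> :: nat \<Rightarrow> real).
            finite A \<and> (\<forall>x\<in>A. \<forall>i. x $ i \<noteq> -\<infinity>) \<and> (\<forall>k. \<alpha> k < 0)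
            \<and> filterlim \<alpha> at_bot sequentially
          \<longrightarrow> PK_limit (\<lambda>k. sigma_hull (\<alpha> k) A) (minplus_hull A))"
  using PK_limit_sigma_hull_maxplus_hull PK_limit_sigma_hull_minplus_hull by blast

end
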